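(* Let $p\in\mathbb{T}^{\mathcal{P}([n])}$ be a tropical Wick vector. Then every circuit of $p$ is tropically orthogonal to every cocircuit of $p$.
   Context: $\mathbb{T}=\mathbb{R}\cup\{\infty\}$; $\mathcal{P}([n])$ the set of subsets of $[n]$. A tropical Wick vector is $p\in\mathbb{T}^{\mathcal{P}([n])}$ such that for all $S,T\subseteq[n]$ the minimum $\min_{i\in S\Delta T}(p_{S\Delta\{i\}}+p_{T\Delta\{i\}})$ is attained at least twice or equals $\infty$. Let $\mathcal{J}=\{1,\dots,n,1^*,\dots,n^*\}$ with involution $i\leftrightarrow i^*$. For $S\subseteq[n]$ its extension is the set $\bar S=S\cup\{i^*: i\in[n]\setminus S\}\subseteq\mathcal{J}$, and $\bar p_{\bar S}:=p_S$. For $T\subseteq[n]$ define $c_T\in\mathbb{T}^{\mathcal{J}}$ by $(c_T)_i=\bar p_{\bar T\Delta\{i,i^*\}}$ if $i\in\bar T$ and $\infty$ otherwise, and $c^*_T\in\mathbb{T}^{\mathcal{J}}$ by $(c^*_T)_i=\bar p_{\bar T\Delta\{i,i^*\}}$ if $i\notin\bar T$ and $\infty$ otherwise. A circuit of $p$ is a vector $c_T+\lambda\mathbf{1}$ ($T\subseteq[n]$, $\lambda\in\mathbb{R}$) with nonempty support (support = set of coordinates $\neq\infty$); a cocircuit of $p$ is a vector $c^*_T+\lambda\mathbf{1}$ with nonempty support. Two vectors $x,y\in\mathbb{T}^N$ are tropically orthogonal if $\min_k(x_k+y_k)$ is attained at least twice or equals $\infty$. *)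

theory Defs
  imports "HOL-Library.Extended_Real"
begin

text \<open>Tropical numbers T = R \<union> {\<infinity>} are modelled as extended reals different from -\<infinity>.
  The ground set [n] is {1..n}.  The set J = {1..n,1*..n*} is modelled with a datatype.\<close>

datatype elem = Pl nat | St nat

fun dual :: "elem \<Rightarrow> elem" where
  "dual (Pl i) = St i" | "dual (St i) = Pl i"

fun base :: "elem \<Rightarrow> nat" where
  "base (Pl i) = i" | "base (St i) = i"

definition tropical :: "ereal \<Rightarrow> bool" where
  "tropical x \<longleftrightarrow> x \<noteq> -\<infinity>"

definition Jset :: "nat \<Rightarrow> elem set" where
  "Jset n = Pl ` {1..n} \<union> St ` {1..n}"

text \<open>The minimum of f over I is attained at least twice or equals \<infinity>
  (the minimum over an empty index set is \<infinity>).\<close>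
definition min_twice_or_inf :: "'a set \<Rightarrow> ('a \<Rightarrow> ereal) \<Rightarrow> bool" where
  "min_twice_or_inf I f \<longleftrightarrow>
     (\<forall>i\<in>I. f i = \<infinity>) \<or>
     (\<exists>i\<in>I. \<exists>j\<in>I. i \<noteq> j \<and> f i = f j \<and> (\<forall>k\<in>I. f i \<le> f k))"

definition tropical_wick :: "nat \<Rightarrow> (nat set \<Rightarrow> ereal) \<Rightarrow> bool" where
  "tropical_wick n p \<longleftrightarrow>
     (\<forall>S. S \<subseteq> {1..n} \<longrightarrow> tropical (p S)) \<and>
     (\<forall>S T. S \<subseteq> {1..n} \<longrightarrow> T \<subseteq> {1..n} \<longrightarrow>
        min_twice_or_inf (S - T \<union> (T - S)) (\<lambda>i. p (S - {i} \<union> ({i} - S)) + p (T - {i} \<union> ({i} - T))))"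

definition ext :: "nat \<Rightarrow> nat set \<Rightarrow> elem set" where
  "ext n S = Pl ` S \<union> St ` ({1..n} - S)"

text \<open>pbar on extensions: pbar (ext S) = p S (every extension is recovered from its Pl-part).\<close>
definition pbar :: "(nat set \<Rightarrow> ereal) \<Rightarrow> elem set \<Rightarrow> ereal" where
  "pbar p X = p {i. Pl i \<in> X}"

definition symdiff :: "'a set \<Rightarrow> 'a set \<Rightarrow> 'a set" where
  "symdiff A B = (A - B) \<union> (B - A)"

definition circ_vec :: "nat \<Rightarrow> (nat set \<Rightarrow> ereal) \<Rightarrow> nat set \<Rightarrow> elem \<Rightarrow> ereal" where
  "circ_vec n p T i = (if i \<in> ext n T then pbar p (symdiff (ext n T) {i, dual i}) else \<infinity>)"

definition cocirc_vec :: "nat \<Rightarrow> (nat set \<Rightarrow> ereal) \<Rightarrow> nat set \<Rightarrow> elem \<Rightarrow> ereal" where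
  "cocirc_vec n p T i = (if i \<notin> ext n T then pbar p (symdiff (ext n T) {i, dual i}) else \<infinity>)"

text \<open>Vectors in T^J are functions elem \<Rightarrow> ereal considered on Jset n.\<close>
definition is_circuit :: "nat \<Rightarrow> (nat set \<Rightarrow> ereal) \<Rightarrow> (elem \<Rightarrow> ereal) \<Rightarrow> bool" where
  "is_circuit n p x \<longleftrightarrow>
     (\<exists>T lam. T \<subseteq> {1..n} \<and> (\<forall>j\<in>Jset n. x j = circ_vec n p T j + ereal lam)) \<and>
     (\<exists>j\<in>Jset n. x j \<noteq> \<infinity>)"

definition is_cocircuit :: "nat \<Rightarrow> (nat set \<Rightarrow> ereal) \<Rightarrow> (elem \<Rightarrow> ereal) \<Rightarrow> bool" where
  "is_cocircuit n p x \<longleftrightarrow>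
     (\<exists>T lam. T \<subseteq> {1..n} \<and> (\<forall>j\<in>Jset n. x j = cocirc_vec n p T j + ereal lam)) \<and>
     (\<exists>j\<in>Jset n. x j \<noteq> \<infinity>)"

definition trop_orthogonal :: "'a set \<Rightarrow> ('a \<Rightarrow> ereal) \<Rightarrow> ('a \<Rightarrow> ereal) \<Rightarrow> bool" where
  "trop_orthogonal N x y \<longleftrightarrow> min_twice_or_inf N (\<lambda>k. x k + y k)"

end

theory Submission
  imports Defs
begin

text \<open>Fix a circuit c_T + \<lambda> and a cocircuit c*_U + \<mu>. Their coordinatewise sum is \<infinity>
  except at one coordinate per a \<in> T \<Delta> U, namely a if a \<in> T - U and a* if a \<in> U - T,
  where it equals p(T \<Delta> {a}) + p(U \<Delta> {a}) + \<lambda> + \<mu>. So the sum is, up to the finite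
  shift \<lambda> + \<mu> and padding with \<infinity>, the vector whose minimum is attained twice by the Wick
  relation for the pair (T, U).\<close>

lemma min_twice_or_inf_add_const:
  assumes "min_twice_or_inf I f" and "c \<noteq> -\<infinity>" and "\<And>i. i \<in> I \<Longrightarrow> g i = f i + c"
  shows "min_twice_or_inf I g"
  using assms unfolding min_twice_or_inf_def by (metis add_right_mono ereal_plus_eq_PInfty)

lemma min_twice_or_inf_reindex:
  assumes "min_twice_or_inf D f"
    and "inj_on h D" and "h ` D \<subseteq> J"
    and "\<And>a. a \<in> D \<Longrightarrow> F (h a) = f a"
    and "\<And>k. k \<in> J \<Longrightarrow> k \<notin> h ` D \<Longrightarrow> F k = \<infinity>"
  shows "min_twice_or_inf J F"
proof (cases "\<forall>a\<in>D. f a = \<infinity>")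
  case True
  then have "\<forall>k\<in>J. F k = \<infinity>" using assms(4,5) by (metis imageE)
  then show ?thesis unfolding min_twice_or_inf_def by blast
next
  case False
  then obtain a b where ab: "a \<in> D" "b \<in> D" "a \<noteq> b" "f a = f b" "\<forall>d\<in>D. f a \<le> f d"
    using assms(1) unfolding min_twice_or_inf_def by blast
  have "F (h a) \<le> F k" if "k \<in> J" for k
    using that ab assms(4,5) by (cases "k \<in> h ` D") auto
  moreover have "h a \<noteq> h b" using ab assms(2) by (auto dest: inj_onD)
  ultimately show ?thesis
    using ab assms(3,4) unfolding min_twice_or_inf_def by (metis image_subset_iff)
qed

lemma tropical_wick_min_twice_or_inf:
  assumes "tropical_wick n p" and "S \<subseteq> {1..n}" and "T \<subseteq> {1..n}"
  shows "min_twice_or_inf (symdiff S T) (\<lambda>i. p (symdiff S {i}) + p (symdiff T {i}))"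
  using assms unfolding tropical_wick_def symdiff_def by blast

lemma tropical_wick_not_MInfty:
  "tropical_wick n p \<Longrightarrow> S \<subseteq> {1..n} \<Longrightarrow> p S \<noteq> -\<infinity>"
  unfolding tropical_wick_def tropical_def by blast

lemma Pl_part_symdiff_ext:
  assumes "T \<subseteq> {1..n}" "a \<in> {1..n}"
  shows "{i. Pl i \<in> symdiff (ext n T) {Pl a, St a}} = symdiff T {a}"
    and "{i. Pl i \<in> symdiff (ext n T) {St a, Pl a}} = symdiff T {a}"
  using assms by (auto simp: symdiff_def ext_def)

lemma circ_vec_Pl:
  "T \<subseteq> {1..n} \<Longrightarrow> a \<in> {1..n} \<Longrightarrow>
    circ_vec n p T (Pl a) = (if a \<in> T then p (symdiff T {a}) else \<infinity>)"
  unfolding circ_vec_def pbar_def using Pl_part_symdiff_ext[of T n a] by (auto simp: ext_def)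

lemma circ_vec_St:
  "T \<subseteq> {1..n} \<Longrightarrow> a \<in> {1..n} \<Longrightarrow>
    circ_vec n p T (St a) = (if a \<in> T then \<infinity> else p (symdiff T {a}))"
  unfolding circ_vec_def pbar_def using Pl_part_symdiff_ext[of T n a] by (auto simp: ext_def)

lemma cocirc_vec_Pl:
  "T \<subseteq> {1..n} \<Longrightarrow> a \<in> {1..n} \<Longrightarrow>
    cocirc_vec n p T (Pl a) = (if a \<in> T then \<infinity> else p (symdiff T {a}))"
  unfolding cocirc_vec_def pbar_def using Pl_part_symdiff_ext[of T n a] by (auto simp: ext_def)

lemma cocirc_vec_St:
  "T \<subseteq> {1..n} \<Longrightarrow> a \<in> {1..n} \<Longrightarrow>
    cocirc_vec n p T (St a) = (if a \<in> T then p (symdiff T {a}) else \<infinity>)"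
  unfolding cocirc_vec_def pbar_def using Pl_part_symdiff_ext[of T n a] by (auto simp: ext_def)

lemma circ_vec_add_cocirc_vec_Pl:
  assumes "tropical_wick n p" "T \<subseteq> {1..n}" "U \<subseteq> {1..n}" "a \<in> {1..n}"
  shows "circ_vec n p T (Pl a) + cocirc_vec n p U (Pl a) =
    (if a \<in> T - U then p (symdiff T {a}) + p (symdiff U {a}) else \<infinity>)"
  using assms tropical_wick_not_MInfty[of n p "symdiff T {_}"]
  by (auto simp: circ_vec_Pl cocirc_vec_Pl symdiff_def)

lemma circ_vec_add_cocirc_vec_St:
  assumes "tropical_wick n p" "T \<subseteq> {1..n}" "U \<subseteq> {1..n}" "a \<in> {1..n}"
  shows "circ_vec n p T (St a) + cocirc_vec n p U (St a) =
    (if a \<in> U - T then p (symdiff T {a}) + p (symdiff U {a}) else \<infinity>)"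
  using assms tropical_wick_not_MInfty[of n p "symdiff U {_}"]
  by (auto simp: circ_vec_St cocirc_vec_St symdiff_def)

lemma trop_orthogonal_circ_vec_cocirc_vec:
  assumes wick: "tropical_wick n p" and T: "T \<subseteq> {1..n}" and U: "U \<subseteq> {1..n}"
  shows "trop_orthogonal (Jset n) (circ_vec n p T) (cocirc_vec n p U)"
  unfolding trop_orthogonal_def
proof (rule min_twice_or_inf_reindex[OF tropical_wick_min_twice_or_inf[OF wick T U]])
  let ?h = "\<lambda>a. if a \<in> T then Pl a else St a"
  have D: "symdiff T U \<subseteq> {1..n}" using T U by (auto simp: symdiff_def)
  show "inj_on ?h (symdiff T U)" by (auto simp: inj_on_def)
  show "?h ` symdiff T U \<subseteq> Jset n" using D by (auto simp: Jset_def)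
  show "circ_vec n p T (?h a) + cocirc_vec n p U (?h a) = p (symdiff T {a}) + p (symdiff U {a})"
    if "a \<in> symdiff T U" for a
    using that D circ_vec_add_cocirc_vec_Pl[OF wick T U] circ_vec_add_cocirc_vec_St[OF wick T U]
    by (auto simp: symdiff_def)
  show "circ_vec n p T k + cocirc_vec n p U k = \<infinity>"
    if "k \<in> Jset n" "k \<notin> ?h ` symdiff T U" for k
  proof -
    obtain a where a: "a \<in> {1..n}" "k = Pl a \<or> k = St a"
      using \<open>k \<in> Jset n\<close> unfolding Jset_def by blast
    then have "a \<notin> symdiff T U \<or> k \<noteq> ?h a" using that(2) by blast
    then show ?thesis
      using a circ_vec_add_cocirc_vec_Pl[OF wick T U a(1)] circ_vec_add_cocirc_vec_St[OF wick T U a(1)]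
      by (cases "a \<in> T") (auto simp: symdiff_def)
  qed
qed

theorem proposition6p4:
  fixes n :: nat and p :: "nat set \<Rightarrow> ereal" and x y :: "elem \<Rightarrow> ereal"
  assumes "tropical_wick n p"
    and "is_circuit n p x"
    and "is_cocircuit n p y"
  shows "trop_orthogonal (Jset n) x y"
proof -
  obtain T lam where T: "T \<subseteq> {1..n}"
    and x: "\<And>j. j \<in> Jset n \<Longrightarrow> x j = circ_vec n p T j + ereal lam"
    using assms(2) unfolding is_circuit_def by blast
  obtain U mu where U: "U \<subseteq> {1..n}"
    and y: "\<And>j. j \<in> Jset n \<Longrightarrow> y j = cocirc_vec n p U j + ereal mu"
    using assms(3) unfolding is_cocircuit_def by blast
  have sum: "x j + y j = (circ_vec n p T j + cocirc_vec n p U j) + (ereal lam + ereal mu)"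
    if "j \<in> Jset n" for j
    using that by (simp only: x y ac_simps)
  show ?thesis
    using trop_orthogonal_circ_vec_cocirc_vec[OF assms(1) T U] unfolding trop_orthogonal_def
    by (rule min_twice_or_inf_add_const[where c = "ereal lam + ereal mu"]) (simp_all add: sum)
qed

end
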